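(* Let $(X,d)$ be a complete metric space and $\mathcal S$ a semigroup acting on $X$. Assume there exists $k<\kappa(X)$ such that for all $(x,y)\in X\times X$ with $D(x,o(y))\le D(x,o(x))$ and for all $s\in\mathcal S$, $$\inf_{t\in\mathcal S^1} D(sx,o(tsy))\le k\,D(x,o(y)).$$ Then either all the orbits are unbounded or there exists $x\in X$ such that $sx=x$ for all $s\in\mathcal S$.
   Context: A semigroup action is a map $\mathcal S\times X\to X$, $(s,x)\mapsto sx$, with $(st)x=s(tx)$. $\mathcal S^1$ denotes $\mathcal S$ with an identity $1$ adjoined (acting as the identity map; $\mathcal S^1=\mathcal S$ if $\mathcal S$ already has an identity). The orbit of $x$ is $o(x)=\{x\}\cup\{sx:s\in\mathcal S\}$; for nonempty $C\subseteq X$, $D(x,C)=\sup\{d(x,y):y\in C\}$. $B(x,r)$ denotes the closed ball. For $c\ge1$, balls in $X$ are $c$-regular if for every $k'<c$ there are $\mu,\alpha\in(0,1)$ such that for all $x,y\in X$ and $r>0$ with $d(x,y)\ge(1-\mu)r$ there exists $z\in X$ with $B(x,(1+\mu)r)\cap B(y,k'(1+\mu)r)\subseteq B(z,\alpha r)$. The Lifschitz characteristic is $\kappa(X)=\sup\{c\ge1:\text{balls in }X\text{ are }c\text{-regular}\}$. *)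

theory Defs
  imports "HOL-Analysis.Analysis"
begin

definition semigroup_action :: "('s::semigroup_mult \<Rightarrow> 'a \<Rightarrow> 'a) \<Rightarrow> bool" where
  "semigroup_action act \<longleftrightarrow> (\<forall>s t x. act (s * t) x = act s (act t x))"

text \<open>Action of S^1: None is the adjoined identity.\<close>
definition act1 :: "('s \<Rightarrow> 'a \<Rightarrow> 'a) \<Rightarrow> 's option \<Rightarrow> 'a \<Rightarrow> 'a" where
  "act1 act t x = (case t of None \<Rightarrow> x | Some s \<Rightarrow> act s x)"

definition orbit :: "('s \<Rightarrow> 'a \<Rightarrow> 'a) \<Rightarrow> 'a \<Rightarrow> 'a set" where
  "orbit act x = {x} \<union> range (\<lambda>s. act s x)"

definition Dsup :: "'a::metric_space \<Rightarrow> 'a set \<Rightarrow> ereal" where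
  "Dsup x C = (SUP y\<in>C. ereal (dist x y))"

definition c_regular :: "'a::metric_space itself \<Rightarrow> real \<Rightarrow> bool" where
  "c_regular _ c \<longleftrightarrow>
     (\<forall>k'. k' < c \<longrightarrow> (\<exists>\<mu> \<alpha>. 0 < \<mu> \<and> \<mu> < 1 \<and> 0 < \<alpha> \<and> \<alpha> < 1 \<and>
        (\<forall>(x::'a) y r. r > 0 \<and> dist x y \<ge> (1 - \<mu>) * r \<longrightarrow>
           (\<exists>z. cball x ((1 + \<mu>) * r) \<inter> cball y (k' * (1 + \<mu>) * r) \<subseteq> cball z (\<alpha> * r)))))"

definition lifschitz_char :: "'a::metric_space itself \<Rightarrow> ereal" where
  "lifschitz_char T = Sup {ereal c | c. c \<ge> 1 \<and> c_regular T c}"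

end

theory Submission
  imports Defs
begin

(* Let rad x be the radius of o(x) around x, and let m(x) be the infimum of the radii of balls
   containing a suborbit o(w), w in o(x).  Put K = max k 0 and fix K < k' < kappa(X).  If o(y)
   lies in B(x, a) and some point of o(x) is at distance at least a from x, the hypothesis
   yields, for every s and every b > K a, a suborbit of o(y) inside B(sx, b).  Regularity of
   balls then forces the centre y of a nearly optimal ball around a suborbit of x not to be moved
   by more than (1 - mu) m(x), so o(y) lies in that ball.  This gives a point y with
   rad y <= q rad x, q = (1 + alpha)/2 < 1, and d(x, y) <= 2 rad x.  Iterating from a point with
   bounded orbit yields a Cauchy sequence whose orbit radii tend to 0; at its limit z every
   o(x_n) lies in a small ball B(z, a_n), which puts o(z) into B(z, (K + 1) a_n), so z is a
   common fixed point. *)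

lemma orbit_self [simp]: "x \<in> orbit act x"
  by (simp add: orbit_def)

lemma act_in_orbit [simp]: "act s x \<in> orbit act x"
  by (simp add: orbit_def)

lemma orbit_ne_empty [simp]: "orbit act x \<noteq> {}"
  by (simp add: orbit_def)

lemma nonneg_if_orbit_subset_cball: "orbit act w \<subseteq> cball y a \<Longrightarrow> 0 \<le> a"
  by (meson orbit_self subsetD mem_cball zero_le_dist order_trans)

lemma mem_orbit_iff: "v \<in> orbit act x \<longleftrightarrow> v = x \<or> (\<exists>s. v = act s x)"
  by (auto simp: orbit_def)

lemma act1_in_orbit: "act1 act t x \<in> orbit act x"
  by (cases t) (auto simp: act1_def)

lemma orbit_subset_orbit:
  assumes "semigroup_action act" and "w \<in> orbit act x"
  shows "orbit act w \<subseteq> orbit act x"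
  using assms by (auto simp: mem_orbit_iff semigroup_action_def) (metis act_in_orbit)+

lemma Dsup_le_iff: "Dsup x C \<le> ereal a \<longleftrightarrow> C \<subseteq> cball x a"
  by (auto simp: Dsup_def SUP_le_iff)

lemma Dsup_nonneg: "C \<noteq> {} \<Longrightarrow> 0 \<le> Dsup x C"
  unfolding Dsup_def by (metis SUP_upper2 ex_in_conv zero_ereal_def zero_le_dist ereal_less_eq(3))

lemma Dsup_le_Dsup_if_cball:
  assumes "C \<subseteq> cball x a" and "v \<in> C'" and "a \<le> dist x v"
  shows "Dsup x C \<le> Dsup x C'"
proof -
  have "Dsup x C \<le> ereal (dist x v)"
    using assms(1,3) by (auto simp: Dsup_le_iff)
  also have "\<dots> \<le> Dsup x C'"
    unfolding Dsup_def using assms(2) by (rule SUP_upper)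
  finally show ?thesis .
qed

lemma dist_le_sum_dist_Suc:
  fixes x :: "nat \<Rightarrow> 'a::metric_space"
  assumes "m \<le> n"
  shows "dist (x m) (x n) \<le> (\<Sum>i\<in>{m..<n}. dist (x i) (x (Suc i)))"
  using assms
proof (induction n rule: dec_induct)
  case (step n)
  then show ?case
    using dist_triangle[of "x m" "x (Suc n)" "x n"] by (simp add: dist_commute)
qed simp

lemma Cauchy_if_summable_dist:
  fixes x :: "nat \<Rightarrow> 'a::metric_space"
  assumes "summable (\<lambda>i. dist (x i) (x (Suc i)))"
  shows "Cauchy x"
  unfolding Cauchy_altdef
proof (intro allI impI)
  fix e :: real
  assume "0 < e"
  then obtain M where M: "\<And>m n. M \<le> m \<Longrightarrow> norm (\<Sum>i\<in>{m..<n}. dist (x i) (x (Suc i))) < e"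
    using assms \<open>0 < e\<close> unfolding summable_Cauchy by blast
  have "dist (x m) (x n) < e" if "M \<le> m" "m < n" for m n
    using dist_le_sum_dist_Suc[of m n x] M[of m n] that by simp
  then show "\<exists>M. \<forall>m\<ge>M. \<forall>n>m. dist (x m) (x n) < e"
    by blast
qed

locale regular_contracting_action =
  fixes act :: "'s::semigroup_mult \<Rightarrow> 'a::metric_space \<Rightarrow> 'a" and K k' \<mu> \<alpha> :: real
  assumes action: "semigroup_action act"
    and contracting: "\<And>x y s. Dsup x (orbit act y) \<le> Dsup x (orbit act x) \<Longrightarrow>
      (INF t. Dsup (act s x) (orbit act (act1 act t (act s y)))) \<le> ereal K * Dsup x (orbit act y)"
    and K_nonneg: "0 \<le> K" and K_less: "K < k'"
    and \<mu>: "0 < \<mu>" "\<mu> < 1" and \<alpha>: "0 < \<alpha>" "\<alpha> < 1"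
    and regular: "\<And>(x::'a) y r. 0 < r \<Longrightarrow> (1 - \<mu>) * r \<le> dist x y \<Longrightarrow>
      \<exists>z. cball x ((1 + \<mu>) * r) \<inter> cball y (k' * (1 + \<mu>) * r) \<subseteq> cball z (\<alpha> * r)"
begin

abbreviation orb :: "'a \<Rightarrow> 'a set" where "orb x \<equiv> orbit act x"

lemma orbit_subset: "w \<in> orb x \<Longrightarrow> orb w \<subseteq> orb x"
  using orbit_subset_orbit[OF action] .

lemma contracting_cball:
  assumes cond: "Dsup x (orb y) \<le> Dsup x (orb x)" and sub: "orb y \<subseteq> cball x a" and "K * a < b"
  shows "\<exists>w\<in>orb y. orb w \<subseteq> cball (act s x) b"
proof -
  have "(INF t. Dsup (act s x) (orb (act1 act t (act s y)))) \<le> ereal K * Dsup x (orb y)"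
    using contracting[OF cond] .
  also have "\<dots> \<le> ereal K * ereal a"
    using sub K_nonneg by (intro ereal_mult_left_mono) (auto simp: Dsup_le_iff)
  also have "\<dots> < ereal b"
    using \<open>K * a < b\<close> by simp
  finally obtain t where "Dsup (act s x) (orb (act1 act t (act s y))) < ereal b"
    by (meson INF_less_iff)
  then have "orb (act1 act t (act s y)) \<subseteq> cball (act s x) b"
    using Dsup_le_iff less_imp_le by blast
  moreover have "act1 act t (act s y) \<in> orb y"
    using orbit_subset[OF act_in_orbit] act1_in_orbit by (rule subsetD)
  ultimately show ?thesis
    by blast
qed

text \<open>For an unbounded orbit the supremum is a junk value.\<close>
definition rad :: "'a \<Rightarrow> real" where
  "rad x = Sup (dist x ` orb x)"

lemma bdd_above_dist_orbit: "bounded (orb x) \<Longrightarrow> bdd_above (dist x ` orb x)"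
  by (auto simp: bounded_any_center[of _ x] bdd_above_def)

lemma orbit_subset_cball_rad: "bounded (orb x) \<Longrightarrow> orb x \<subseteq> cball x (rad x)"
  by (auto simp: rad_def intro!: cSup_upper bdd_above_dist_orbit)

lemma rad_le: "orb x \<subseteq> cball x a \<Longrightarrow> rad x \<le> a"
  unfolding rad_def by (intro cSup_least) auto

lemma rad_nonneg: "bounded (orb x) \<Longrightarrow> 0 \<le> rad x"
  by (metis centre_in_cball orbit_self orbit_subset_cball_rad subsetD)

lemma less_rad_imp_far_point: "bounded (orb x) \<Longrightarrow> \<theta> < rad x \<Longrightarrow> \<exists>v\<in>orb x. \<theta> < dist x v"
  unfolding rad_def by (subst (asm) less_cSup_iff) (auto intro: bdd_above_dist_orbit)

definition suborbit_radii :: "'a \<Rightarrow> real set" where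
  "suborbit_radii x = {a. \<exists>w\<in>orb x. \<exists>y. orb w \<subseteq> cball y a}"

definition suborbit_radius :: "'a \<Rightarrow> real" where
  "suborbit_radius x = Inf (suborbit_radii x)"

lemma suborbit_radii_nonneg: "a \<in> suborbit_radii x \<Longrightarrow> 0 \<le> a"
  unfolding suborbit_radii_def by (auto intro: nonneg_if_orbit_subset_cball)

lemma bdd_below_suborbit_radii: "bdd_below (suborbit_radii x)"
  by (meson bdd_below.I suborbit_radii_nonneg)

lemma suborbit_radius_lower: "a \<in> suborbit_radii x \<Longrightarrow> suborbit_radius x \<le> a"
  unfolding suborbit_radius_def by (rule cInf_lower[OF _ bdd_below_suborbit_radii])

lemma rad_in_suborbit_radii: "bounded (orb x) \<Longrightarrow> rad x \<in> suborbit_radii x"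
  unfolding suborbit_radii_def using orbit_self orbit_subset_cball_rad by fast

lemma suborbit_radius_nonneg: "bounded (orb x) \<Longrightarrow> 0 \<le> suborbit_radius x"
  unfolding suborbit_radius_def
  by (rule cInf_greatest) (auto dest: rad_in_suborbit_radii suborbit_radii_nonneg)

lemma suborbit_radius_lessE:
  assumes "bounded (orb x)" and "suborbit_radius x < b"
  obtains a w y where "a < b" "w \<in> orb x" "orb w \<subseteq> cball y a"
proof -
  have "suborbit_radii x \<noteq> {}"
    using rad_in_suborbit_radii[OF assms(1)] by blast
  then obtain a where "a \<in> suborbit_radii x" "a < b"
    using assms(2) unfolding suborbit_radius_def by (meson cInf_less_iff bdd_below_suborbit_radii)
  then show ?thesis
    using that unfolding suborbit_radii_def by blast
qed

lemma suborbit_radius_le_if_far_move: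
  assumes w: "w \<in> orb x" and sub: "orb w \<subseteq> cball y a" and a: "a \<le> (1 + \<mu>) * r"
    and cond: "Dsup y (orb w) \<le> Dsup y (orb y)"
    and r: "0 < r" and far: "(1 - \<mu>) * r \<le> dist y (act s y)"
  shows "suborbit_radius x \<le> \<alpha> * r"
proof -
  have "K * a \<le> K * ((1 + \<mu>) * r)"
    using K_nonneg a by (rule mult_left_mono[rotated])
  also have "\<dots> < k' * (1 + \<mu>) * r"
    using K_less \<mu> r by simp
  finally obtain w' where w': "w' \<in> orb w" "orb w' \<subseteq> cball (act s y) (k' * (1 + \<mu>) * r)"
    using contracting_cball[OF cond sub] by blast
  have "orb w' \<subseteq> cball y ((1 + \<mu>) * r)"
    using orbit_subset[OF w'(1)] sub subset_cball[OF a] by blast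
  moreover obtain z
    where "cball y ((1 + \<mu>) * r) \<inter> cball (act s y) (k' * (1 + \<mu>) * r) \<subseteq> cball z (\<alpha> * r)"
    using regular[OF r far] by blast
  ultimately have "orb w' \<subseteq> cball z (\<alpha> * r)"
    using w'(2) by blast
  moreover have "w' \<in> orb x"
    using orbit_subset[OF w] w'(1) by blast
  ultimately show ?thesis
    by (intro suborbit_radius_lower) (auto simp: suborbit_radii_def)
qed

lemma suborbit_radius_le_rad:
  assumes bounded: "bounded (orb x)"
  shows "suborbit_radius x \<le> \<alpha> * rad x"
proof (cases "rad x = 0")
  case True
  then show ?thesis
    using suborbit_radius_lower[OF rad_in_suborbit_radii[OF bounded]] by simp
next
  case False
  then have R: "0 < rad x"
    using rad_nonneg[OF bounded] by simp
  moreover have "(1 - \<mu>) * rad x < rad x"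
    using \<mu> R by simp
  ultimately obtain v where v: "v \<in> orb x" "(1 - \<mu>) * rad x < dist x v"
    using less_rad_imp_far_point[OF bounded] by blast
  moreover have "0 \<le> (1 - \<mu>) * rad x"
    using \<mu> R by simp
  ultimately have "v \<noteq> x"
    by auto
  then obtain s where "v = act s x"
    using v(1) by (auto simp: mem_orbit_iff)
  then show ?thesis
    using v \<mu> R orbit_subset_cball_rad[OF bounded]
    by (intro suborbit_radius_le_if_far_move[OF orbit_self, where s = s]) auto
qed

lemma centre_orbit_subset_cball_if_nearly_optimal:
  assumes m: "0 < suborbit_radius x" and w: "w \<in> orb x" and sub: "orb w \<subseteq> cball y a"
    and a: "a < (1 + \<mu>) * suborbit_radius x"
  shows "orb y \<subseteq> cball y a"
proof
  fix v
  assume v: "v \<in> orb y"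
  have ma: "suborbit_radius x \<le> a"
    using w sub by (intro suborbit_radius_lower) (auto simp: suborbit_radii_def)
  show "v \<in> cball y a"
  proof (rule ccontr)
    assume "v \<notin> cball y a"
    then have far: "a < dist y v"
      by simp
    then have cond: "Dsup y (orb w) \<le> Dsup y (orb y)"
      using Dsup_le_Dsup_if_cball[OF sub v] by simp
    have near: "dist y (act s y) < (1 - \<mu>) * suborbit_radius x" for s
    proof (rule ccontr)
      assume "\<not> ?thesis"
      then have "suborbit_radius x \<le> \<alpha> * suborbit_radius x"
        using a by (intro suborbit_radius_le_if_far_move[OF w sub _ cond m, where s = s]) auto
      then show False
        using m \<alpha> by simp
    qed
    have "v \<noteq> y"
      using far m ma by auto
    then obtain s where "v = act s y"
      using v by (auto simp: mem_orbit_iff)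
    moreover have "(1 - \<mu>) * suborbit_radius x \<le> suborbit_radius x"
      using m \<mu> by simp
    ultimately show False
      using near[of s] far ma by simp
  qed
qed

lemma centre_orbit_subset_cball:
  assumes sub: "orb w \<subseteq> cball y a"
  shows "orb y \<subseteq> cball y ((K + 1) * a)"
proof
  fix v
  assume v: "v \<in> orb y"
  have a: "0 \<le> a"
    using sub by (rule nonneg_if_orbit_subset_cball)
  show "v \<in> cball y ((K + 1) * a)"
  proof (cases "dist y v \<le> a")
    case True
    then show ?thesis
      using a K_nonneg by (simp add: distrib_right add_increasing)
  next
    case False
    then have cond: "Dsup y (orb w) \<le> Dsup y (orb y)"
      using Dsup_le_Dsup_if_cball[OF sub v] by simp
    have "v \<noteq> y"
      using False a by auto
    then obtain s where s: "v = act s y"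
      using v by (auto simp: mem_orbit_iff)
    have "dist y v - a \<le> b" if b: "K * a < b" for b
    proof -
      obtain w' where w': "w' \<in> orb w" "orb w' \<subseteq> cball v b"
        using contracting_cball[OF cond sub b] s by blast
      have "dist y w' \<le> a" "dist v w' \<le> b"
        using subsetD[OF sub w'(1)] subsetD[OF w'(2) orbit_self] by auto
      then show ?thesis
        using dist_triangle[of y v w'] by (simp add: dist_commute)
    qed
    then have "dist y v - a \<le> K * a"
      by (rule dense_ge)
    then show ?thesis
      by (simp add: algebra_simps)
  qed
qed

lemma exists_centre_with_smaller_rad:
  assumes bounded: "bounded (orb x)"
  shows "\<exists>y. bounded (orb y) \<and> rad y \<le> (1 + \<alpha>) / 2 * rad x \<and> dist x y \<le> 2 * rad x"
proof (cases "rad x = 0")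
  case True
  then show ?thesis
    using bounded by (intro exI[of _ x]) simp
next
  case False
  define R q where "R = rad x" and "q = (1 + \<alpha>) / 2"
  have R: "0 < R"
    using False rad_nonneg[OF bounded] R_def by simp
  have q: "\<alpha> < q" "q \<le> 1"
    using \<alpha> q_def by auto
  have "\<exists>w\<in>orb x. \<exists>y a. orb w \<subseteq> cball y a \<and> a \<le> R \<and> orb y \<subseteq> cball y (q * R)"
  proof (cases "0 < suborbit_radius x")
    case True
    have "suborbit_radius x < (1 + \<mu>) * suborbit_radius x"
      using True \<mu> by simp
    moreover have "suborbit_radius x < q * R"
      using suborbit_radius_le_rad[OF bounded] mult_strict_right_mono[OF q(1) R] R_def by simp
    ultimately have "suborbit_radius x < min ((1 + \<mu>) * suborbit_radius x) (q * R)"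
      by simp
    then obtain a w y where a: "a < min ((1 + \<mu>) * suborbit_radius x) (q * R)"
      and w: "w \<in> orb x" "orb w \<subseteq> cball y a"
      using suborbit_radius_lessE[OF bounded] by blast
    have "a \<le> q * R" "q * R \<le> R"
      using a q R by auto
    moreover have "orb y \<subseteq> cball y a"
      using centre_orbit_subset_cball_if_nearly_optimal[OF True w] a by simp
    ultimately have "a \<le> R" "orb y \<subseteq> cball y (q * R)"
      using subset_cball[of a "q * R" y] by auto
    then show ?thesis
      using w by blast
  next
    case False
    then have "suborbit_radius x < q * R / (K + 1)"
      using suborbit_radius_nonneg[OF bounded] q \<alpha> R K_nonneg by simp
    then obtain a w y
      where a: "a < q * R / (K + 1)" and w: "w \<in> orb x" "orb w \<subseteq> cball y a"
      using suborbit_radius_lessE[OF bounded] by blast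
    have "0 \<le> a"
      using w(2) by (rule nonneg_if_orbit_subset_cball)
    then have "a \<le> (K + 1) * a" "(K + 1) * a \<le> q * R" "q * R \<le> R"
      using a q R K_nonneg by (auto simp: field_simps)
    moreover have "orb y \<subseteq> cball y ((K + 1) * a)"
      using centre_orbit_subset_cball[OF w(2)] .
    ultimately have "a \<le> R" "orb y \<subseteq> cball y (q * R)"
      using subset_cball[of "(K + 1) * a" "q * R" y] by auto
    then show ?thesis
      using w by blast
  qed
  then obtain w y a where w: "w \<in> orb x"
    and y: "orb w \<subseteq> cball y a" "a \<le> R" "orb y \<subseteq> cball y (q * R)"
    by blast
  have "dist x y \<le> dist x w + dist w y"
    by (rule dist_triangle)
  also have "\<dots> \<le> R + R"
    using subsetD[OF orbit_subset_cball_rad[OF bounded] w] subsetD[OF y(1) orbit_self] y(2) R_def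
    by (simp add: dist_commute)
  finally show ?thesis
    using y(3) bounded_subset[OF bounded_cball y(3)] rad_le[OF y(3)] R_def q_def by auto
qed

lemma bounded_orbit_imp_Cauchy_rad_tendsto_0:
  assumes "bounded (orb x)"
  obtains X where "Cauchy X" "\<And>n. bounded (orb (X n))" "(\<lambda>n. rad (X n)) \<longlonglongrightarrow> 0"
proof -
  define q where "q = (1 + \<alpha>) / 2"
  have q: "0 \<le> q" "q < 1"
    using \<alpha> q_def by auto
  obtain f where f: "\<And>x. bounded (orb x) \<Longrightarrow>
      bounded (orb (f x)) \<and> rad (f x) \<le> q * rad x \<and> dist x (f x) \<le> 2 * rad x"
    using exists_centre_with_smaller_rad[folded q_def] by metis
  define X where "X n = (f ^^ n) x" for n
  have X: "bounded (orb (X n)) \<and> rad (X n) \<le> q ^ n * rad x" for n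
  proof (induction n)
    case 0
    then show ?case
      using assms by (simp add: X_def)
  next
    case (Suc n)
    then have "bounded (orb (X (Suc n)))" "rad (X (Suc n)) \<le> q * rad (X n)"
      using f[of "X n"] by (simp_all add: X_def)
    moreover have "q * rad (X n) \<le> q * (q ^ n * rad x)"
      using Suc q by (simp add: mult_left_mono)
    ultimately show ?case
      by simp
  qed
  have dist_step: "dist (X n) (X (Suc n)) \<le> 2 * rad x * q ^ n" for n
  proof -
    have "dist (X n) (X (Suc n)) \<le> 2 * rad (X n)"
      using f[of "X n"] X[of n] by (simp add: X_def)
    also have "\<dots> \<le> 2 * rad x * q ^ n"
      using X[of n] by (simp add: mult_ac)
    finally show ?thesis .
  qed
  have "summable (\<lambda>n. 2 * rad x * q ^ n)"
    using q by (intro summable_mult summable_geometric) simp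
  then have "summable (\<lambda>n. dist (X n) (X (Suc n)))"
    by (rule summable_comparison_test') (simp add: dist_step)
  then have "Cauchy X"
    by (rule Cauchy_if_summable_dist)
  moreover have "(\<lambda>n. rad (X n)) \<longlonglongrightarrow> 0"
  proof (rule tendsto_sandwich)
    show "\<forall>\<^sub>F n in sequentially. 0 \<le> rad (X n)"
      using X rad_nonneg by simp
    show "\<forall>\<^sub>F n in sequentially. rad (X n) \<le> q ^ n * rad x"
      using X by simp
    show "(\<lambda>n. q ^ n * rad x) \<longlonglongrightarrow> 0"
      using q by (intro tendsto_mult_left_zero LIMSEQ_power_zero) simp
  qed simp
  ultimately show ?thesis
    using that X by blast
qed

lemma limit_is_fixed_point:
  assumes lim: "X \<longlonglongrightarrow> z" and bounded: "\<And>n. bounded (orb (X n))"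
    and rad: "(\<lambda>n. rad (X n)) \<longlonglongrightarrow> 0"
  shows "act s z = z"
proof -
  have bound: "dist z (act s z) \<le> (K + 1) * (dist z (X n) + rad (X n))" for n
  proof -
    have "orb (X n) \<subseteq> cball z (dist z (X n) + rad (X n))"
    proof
      fix v
      assume "v \<in> orb (X n)"
      then have "dist (X n) v \<le> rad (X n)"
        using orbit_subset_cball_rad[OF bounded[of n]] by auto
      then show "v \<in> cball z (dist z (X n) + rad (X n))"
        using dist_triangle[of z v "X n"] by simp
    qed
    then have "act s z \<in> cball z ((K + 1) * (dist z (X n) + rad (X n)))"
      by (rule subsetD[OF centre_orbit_subset_cball act_in_orbit])
    then show ?thesis
      by simp
  qed
  have "(\<lambda>n. (K + 1) * (dist z (X n) + rad (X n))) \<longlonglongrightarrow> (K + 1) * (dist z z + 0)"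
    by (intro tendsto_intros lim rad)
  then have "dist z (act s z) \<le> 0"
    using bound by (intro LIMSEQ_le_const) auto
  then show ?thesis
    by simp
qed

end

lemma less_lifschitz_charE:
  assumes "ereal k < lifschitz_char TYPE('a::metric_space)"
  obtains c where "k < c" "1 \<le> c" "c_regular TYPE('a) c"
  using assms unfolding lifschitz_char_def by (auto simp: less_Sup_iff)

lemma exists_regular_contracting_action:
  fixes act :: "'s::semigroup_mult \<Rightarrow> 'a::metric_space \<Rightarrow> 'a"
  assumes "semigroup_action act"
    and "ereal k < lifschitz_char TYPE('a)"
    and "\<forall>x y. Dsup x (orbit act y) \<le> Dsup x (orbit act x) \<longrightarrow>
           (\<forall>s. (INF t. Dsup (act s x) (orbit act (act1 act t (act s y))))
                  \<le> ereal k * Dsup x (orbit act y))"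
  shows "\<exists>K k' \<mu> \<alpha>. regular_contracting_action act K k' \<mu> \<alpha>"
proof -
  obtain c where c: "k < c" "1 \<le> c" "c_regular TYPE('a) c"
    using less_lifschitz_charE[OF assms(2)] by blast
  define K k' where "K = max k 0" and "k' = (K + c) / 2"
  have K: "0 \<le> K" "K < k'" "k' < c"
    using c by (auto simp: K_def k'_def)
  obtain \<mu> \<alpha> where \<mu>\<alpha>: "0 < \<mu>" "\<mu> < 1" "0 < \<alpha>" "\<alpha> < 1"
    and regular: "\<forall>(x::'a) y r. 0 < r \<and> (1 - \<mu>) * r \<le> dist x y \<longrightarrow>
       (\<exists>z. cball x ((1 + \<mu>) * r) \<inter> cball y (k' * (1 + \<mu>) * r) \<subseteq> cball z (\<alpha> * r))"
    using c(3)[unfolded c_regular_def, rule_format, OF K(3)] by blast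
  have contracting: "(INF t. Dsup (act s x) (orbit act (act1 act t (act s y))))
      \<le> ereal K * Dsup x (orbit act y)"
    if "Dsup x (orbit act y) \<le> Dsup x (orbit act x)" for x y s
  proof -
    have "(INF t. Dsup (act s x) (orbit act (act1 act t (act s y)))) \<le> ereal k * Dsup x (orbit act y)"
      using assms(3) that by blast
    also have "\<dots> \<le> ereal K * Dsup x (orbit act y)"
      by (intro ereal_mult_right_mono Dsup_nonneg) (auto simp: K_def)
    finally show ?thesis .
  qed
  have "regular_contracting_action act K k' \<mu> \<alpha>"
    by unfold_locales (use assms(1) contracting K \<mu>\<alpha> regular in auto)
  then show ?thesis
    by blast
qed

theorem theorem4p1:
  fixes act :: "'s::semigroup_mult \<Rightarrow> 'a::complete_space \<Rightarrow> 'a"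
    and k :: real
  assumes "semigroup_action act"
    and "ereal k < lifschitz_char TYPE('a)"
    and "\<forall>x y. Dsup x (orbit act y) \<le> Dsup x (orbit act x) \<longrightarrow>
           (\<forall>s. (INF t. Dsup (act s x) (orbit act (act1 act t (act s y))))
                  \<le> ereal k * Dsup x (orbit act y))"
  shows "(\<forall>x. \<not> bounded (orbit act x)) \<or> (\<exists>x. \<forall>s. act s x = x)"
proof -
  obtain K k' \<mu> \<alpha> where "regular_contracting_action act K k' \<mu> \<alpha>"
    using exists_regular_contracting_action[OF assms] by blast
  then interpret regular_contracting_action act K k' \<mu> \<alpha> .
  show ?thesis
  proof (cases "\<forall>x. \<not> bounded (orbit act x)")
    case False
    then obtain x where "bounded (orbit act x)"
      by blast
    then obtain X where X: "Cauchy X" "\<And>n. bounded (orbit act (X n))" "(\<lambda>n. rad (X n)) \<longlonglongrightarrow> 0"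
      using bounded_orbit_imp_Cauchy_rad_tendsto_0 by blast
    then obtain z where "X \<longlonglongrightarrow> z"
      using Cauchy_convergent_iff convergent_def by blast
    then have "\<forall>s. act s z = z"
      using limit_is_fixed_point X by blast
    then show ?thesis
      by blast
  qed simp
qed

end
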